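(* Let $p\ge2$, $n\ge1$, $\alpha>1$ real, and $m\in\{j/p^n:0\le j\le p^n\}$ be fixed, and let $\mathcal{B}_m$ be the set of Boolean functions $f:(\mathbb{Z}/p\mathbb{Z})^n\to\{0,1\}$ with $\mathbb{E} f=m$. There exists $\epsilon_0>0$ such that for every $\epsilon\in(0,\epsilon_0)$, every $f\in\mathcal{B}_m$ maximizing $\mathbb{E}(T_\epsilon f)^\alpha$ over $\mathcal{B}_m$ satisfies $I(f)=\min\{I(g):g\in\mathcal{B}_m\}$.
   Context: $(\mathbb{Z}/p\mathbb{Z})^n$ carries the uniform measure; $X$ is a uniform random element. Here the noise operator is $T_\epsilon f(x)=\mathbb{E} f(x+Z)$, where $Z$ has independent coordinates, each equal to $0$ with probability $1-\epsilon$ and to $1$ and to $-1$ (i.e. $p-1$) with probability $\epsilon/2$ each. For $j\in[n]$, let $\tilde Z_j$ take the values $1$ and $-1$ with probability $1/2$ each, independent of $X$; $\tilde\sigma_j(x)=(x_1,\dots,x_j+\tilde Z_j,\dots,x_n)$, $I_j(f)=\mathbb{P}(f(X)\ne f(\tilde\sigma_j(X)))$, and the total influence is $I(f)=\sum_{j=1}^nI_j(f)$. *)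

theory Defs
  imports Complex_Main "HOL-Library.FuncSet"
begin

text \<open>(Z/pZ)^n is represented by the extensional functions {..<n} -> {..<p}.\<close>
definition cube :: "nat \<Rightarrow> nat \<Rightarrow> (nat \<Rightarrow> nat) set" where
  "cube p n = PiE {..<n} (\<lambda>_. {..<p})"

definition signs :: "nat \<Rightarrow> (nat \<Rightarrow> int) set" where
  "signs n = PiE {..<n} (\<lambda>_. {-1, 0, 1})"

definition addvec :: "nat \<Rightarrow> nat \<Rightarrow> (nat \<Rightarrow> nat) \<Rightarrow> (nat \<Rightarrow> int) \<Rightarrow> (nat \<Rightarrow> nat)" where
  "addvec p n x z = (\<lambda>i\<in>{..<n}. nat ((int (x i) + z i) mod int p))"

definition shift :: "nat \<Rightarrow> (nat \<Rightarrow> nat) \<Rightarrow> nat \<Rightarrow> int \<Rightarrow> (nat \<Rightarrow> nat)" where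
  "shift p x j d = x(j := nat ((int (x j) + d) mod int p))"

definition expect :: "nat \<Rightarrow> nat \<Rightarrow> ((nat \<Rightarrow> nat) \<Rightarrow> real) \<Rightarrow> real" where
  "expect p n f = (\<Sum>x\<in>cube p n. f x) / real p ^ n"

definition noise_weight :: "real \<Rightarrow> int \<Rightarrow> real" where
  "noise_weight eps d = (if d = 0 then 1 - eps else eps / 2)"

definition noise_op :: "nat \<Rightarrow> nat \<Rightarrow> real \<Rightarrow> ((nat \<Rightarrow> nat) \<Rightarrow> real) \<Rightarrow> (nat \<Rightarrow> nat) \<Rightarrow> real" where
  "noise_op p n eps f x =
     (\<Sum>z\<in>signs n. (\<Prod>i<n. noise_weight eps (z i)) * f (addvec p n x z))"

text \<open>I_j(f) = P(f(X) \<noteq> f(X + Z_j e_j)), Z_j uniform on {1,-1}.\<close>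
definition influence :: "nat \<Rightarrow> nat \<Rightarrow> ((nat \<Rightarrow> nat) \<Rightarrow> real) \<Rightarrow> nat \<Rightarrow> real" where
  "influence p n f j =
     (\<Sum>d\<in>{-1, 1::int}. real (card {x\<in>cube p n. f x \<noteq> f (shift p x j d)}) / 2) / real p ^ n"

definition total_influence :: "nat \<Rightarrow> nat \<Rightarrow> ((nat \<Rightarrow> nat) \<Rightarrow> real) \<Rightarrow> real" where
  "total_influence p n f = (\<Sum>j<n. influence p n f j)"

text \<open>Boolean functions on the cube with mean m (zero off the cube, for definiteness).\<close>
definition boolean_mean :: "nat \<Rightarrow> nat \<Rightarrow> real \<Rightarrow> ((nat \<Rightarrow> nat) \<Rightarrow> real) set" where
  "boolean_mean p n m = {f. (\<forall>x\<in>cube p n. f x \<in> {0, 1}) \<and> (\<forall>x. x \<notin> cube p n \<longrightarrow> f x = 0)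
                          \<and> expect p n f = m}"

end

theory Submission
  imports Defs
begin

text \<open>
  For a Boolean \<open>f\<close> of mean \<open>m\<close> one has
  \<open>E (T\<^sub>\<epsilon> f)\<^sup>\<alpha> = m - (\<alpha>/2) \<epsilon> I(f) + o(\<epsilon>)\<close> as \<open>\<epsilon> \<rightarrow> 0+\<close>.
  Indeed \<open>T\<^sub>0 f = f\<close>, and the derivative of \<open>T\<^sub>\<epsilon> f\<close> at \<open>\<epsilon> = 0\<close> is the generator
  \<open>L f(x) = \<Sum>\<^sub>i ((f(x + e\<^sub>i) + f(x - e\<^sub>i))/2 - f(x))\<close>. Where \<open>f(x) = 1\<close> the chain rule
  gives slope \<open>\<alpha> L f(x)\<close>; where \<open>f(x) = 0\<close> the term is \<open>O(\<epsilon>\<^sup>\<alpha>) = o(\<epsilon>)\<close> because \<open>\<alpha> > 1\<close>.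
  For Boolean \<open>f\<close> the sum of \<open>f \<cdot> L f\<close> counts boundary edges, which is \<open>-(p\<^sup>n/2) I(f)\<close>.
  As there are only finitely many Boolean functions of mean \<open>m\<close>, for small \<open>\<epsilon>\<close> a
  strict inequality between influences forces the opposite strict inequality between the
  values of \<open>E (T\<^sub>\<epsilon> f)\<^sup>\<alpha>\<close>, so every maximizer minimizes the total influence.
\<close>

subsection \<open>The cube and coordinate shifts\<close>

lemma finite_cube: "finite (cube p n)"
  unfolding cube_def by (simp add: finite_PiE)

lemma finite_signs: "finite (signs n)"
  unfolding signs_def by (simp add: finite_PiE)

lemma shift_in_cube:
  assumes "p > 0" "x \<in> cube p n" "j < n"
  shows "shift p x j d \<in> cube p n"
proof -
  have "nat ((int (x j) + d) mod int p) < p"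
    using assms(1) by (simp add: nat_less_iff)
  then show ?thesis using assms unfolding cube_def shift_def
    by (auto simp: PiE_iff extensional_def)
qed

lemma shift_shift_neg:
  assumes "p > 0" "x \<in> cube p n" "j < n"
  shows "shift p (shift p x j d) j (- d) = x"
proof -
  have "x j < p" using assms unfolding cube_def by auto
  then have "((int (x j) + d) mod int p + - d) mod int p = int (x j)"
    by (simp add: mod_diff_left_eq)
  then show ?thesis
    using assms(1) unfolding shift_def by (simp add: nat_eq_iff)
qed

lemma shift_0:
  assumes "x \<in> cube p n" "j < n"
  shows "shift p x j 0 = x"
proof -
  have "x j < p"
    using assms unfolding cube_def by auto
  then show ?thesis
    unfolding shift_def by simp
qed

lemma sum_cube_shift:
  assumes "p > 0" "j < n"
  shows "(\<Sum>x\<in>cube p n. g (shift p x j d)) = (\<Sum>x\<in>cube p n. g x)"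
  by (rule sum.reindex_bij_witness[where i = "\<lambda>x. shift p x j (- d)" and j = "\<lambda>x. shift p x j d"])
    (use assms shift_in_cube shift_shift_neg[where d = "- d"] shift_shift_neg in auto)

subsection \<open>The noise operator near \<open>\<epsilon> = 0\<close>\<close>

definition axis_vec :: "nat \<Rightarrow> nat \<Rightarrow> int \<Rightarrow> nat \<Rightarrow> int" where
  "axis_vec n i d = (\<lambda>j\<in>{..<n}. if j = i then d else 0)"

lemma addvec_axis_vec:
  assumes "p > 0" "x \<in> cube p n" "i < n"
  shows "addvec p n x (axis_vec n i d) = shift p x i d"
proof -
  have "x k < p" if "k < n" for k
    using assms(2) that unfolding cube_def by auto
  then have "addvec p n x (axis_vec n i d) = restrict (shift p x i d) {..<n}"
    unfolding addvec_def axis_vec_def by (intro restrict_ext) (auto simp: shift_def)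
  also have "\<dots> = shift p x i d"
    using shift_in_cube[OF assms] unfolding cube_def by (rule PiE_restrict)
  finally show ?thesis .
qed

lemma addvec_0:
  assumes "x \<in> cube p n"
  shows "addvec p n x (\<lambda>j\<in>{..<n}. 0) = x"
proof -
  have "x k < p" if "k < n" for k
    using assms that unfolding cube_def by auto
  then have "addvec p n x (\<lambda>j\<in>{..<n}. 0) = restrict x {..<n}"
    unfolding addvec_def by (intro restrict_ext) auto
  also have "\<dots> = x"
    using assms unfolding cube_def by (rule PiE_restrict)
  finally show ?thesis .
qed

lemma prod_noise_weight_0:
  assumes "finite A"
  shows "(\<Prod>j\<in>A. noise_weight 0 (z j)) = (if \<forall>j\<in>A. z j = 0 then 1 else 0)"
  using assms by (auto simp: noise_weight_def prod_zero_iff)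

lemma noise_op_0:
  assumes "x \<in> cube p n"
  shows "noise_op p n 0 f x = f x"
proof -
  let ?zero = "\<lambda>j\<in>{..<n}. 0::int"
  have "(\<Prod>j<n. noise_weight 0 (z j)) = (if z = ?zero then 1 else 0)" if "z \<in> signs n" for z
    using that unfolding signs_def
    by (auto simp: prod_noise_weight_0 PiE_iff extensional_def fun_eq_iff)
  moreover have "?zero \<in> signs n"
    unfolding signs_def by auto
  ultimately have "noise_op p n 0 f x = (\<Sum>z\<in>signs n. if z = ?zero then f (addvec p n x z) else 0)"
    unfolding noise_op_def by (intro sum.cong) auto
  also have "\<dots> = f x"
    using \<open>?zero \<in> signs n\<close> addvec_0[OF assms] finite_signs by (simp add: sum.delta)
  finally show ?thesis .
qed

lemma sum_signs_axis:
  assumes "i < n"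
  shows "(\<Sum>z\<in>signs n. (\<Prod>j\<in>{..<n}-{i}. noise_weight 0 (z j)) * h z)
       = (\<Sum>d\<in>{-1,0,1}. h (axis_vec n i d))"
proof -
  have axis: "{z \<in> signs n. \<forall>j\<in>{..<n}-{i}. z j = 0} = axis_vec n i ` {-1,0,1}"
  proof (intro set_eqI iffI)
    fix z assume z: "z \<in> {z \<in> signs n. \<forall>j\<in>{..<n}-{i}. z j = 0}"
    then have "z = axis_vec n i (z i)"
      unfolding axis_vec_def signs_def by (auto simp: PiE_iff extensional_def)
    moreover have "z i \<in> {-1,0,1}"
      using z assms unfolding signs_def by auto
    ultimately show "z \<in> axis_vec n i ` {-1,0,1}" by blast
  next
    fix z assume "z \<in> axis_vec n i ` {-1,0,1}"
    then obtain d where d: "d \<in> {-1,0,1}" "z = axis_vec n i d" by blast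
    have "axis_vec n i d \<in> signs n"
      unfolding signs_def axis_vec_def using d(1) by (simp add: restrict_PiE_iff)
    moreover have "\<forall>j\<in>{..<n}-{i}. axis_vec n i d j = 0"
      unfolding axis_vec_def by simp
    ultimately show "z \<in> {z \<in> signs n. \<forall>j\<in>{..<n}-{i}. z j = 0}"
      using d(2) by simp
  qed
  have "inj_on (axis_vec n i) {-1,0,1}"
    using assms by (intro inj_onI) (drule fun_cong[where x = i], simp add: axis_vec_def)
  then have "(\<Sum>d\<in>{-1,0,1}. h (axis_vec n i d)) = (\<Sum>z\<in>{z \<in> signs n. \<forall>j\<in>{..<n}-{i}. z j = 0}. h z)"
    by (simp add: axis sum.reindex)
  also have "\<dots> = (\<Sum>z\<in>signs n. if \<forall>j\<in>{..<n}-{i}. z j = 0 then h z else 0)"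
    by (rule sum.inter_filter[OF finite_signs])
  also have "\<dots> = (\<Sum>z\<in>signs n. (\<Prod>j\<in>{..<n}-{i}. noise_weight 0 (z j)) * h z)"
    by (intro sum.cong refl) (simp add: prod_noise_weight_0)
  finally show ?thesis ..
qed

definition noise_weight_deriv :: "int \<Rightarrow> real" where
  "noise_weight_deriv d = (if d = 0 then -1 else 1 / 2)"

lemma has_field_derivative_noise_weight:
  "((\<lambda>e. noise_weight e d) has_field_derivative noise_weight_deriv d) (at e0)"
  unfolding noise_weight_def noise_weight_deriv_def
  by (cases "d = 0") (auto intro!: derivative_eq_intros)

definition noise_generator :: "nat \<Rightarrow> nat \<Rightarrow> ((nat \<Rightarrow> nat) \<Rightarrow> real) \<Rightarrow> (nat \<Rightarrow> nat) \<Rightarrow> real" where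
  "noise_generator p n f x = (\<Sum>i<n. (f (shift p x i 1) + f (shift p x i (-1))) / 2 - f x)"

lemma noise_op_has_derivative_at_0:
  assumes "p > 0" "x \<in> cube p n"
  shows "((\<lambda>e. noise_op p n e f x) has_field_derivative noise_generator p n f x) (at 0)"
proof -
  let ?g = "\<lambda>z. f (addvec p n x z)"
  have "((\<lambda>e. noise_op p n e f x) has_field_derivative
      (\<Sum>z\<in>signs n. (\<Sum>i<n. noise_weight_deriv (z i) * (\<Prod>j\<in>{..<n}-{i}. noise_weight 0 (z j))) * ?g z))
      (at 0)"
    unfolding noise_op_def
    by (intro DERIV_sum DERIV_cmult_right has_field_derivative_prod has_field_derivative_noise_weight)
  moreover have "(\<Sum>z\<in>signs n. (\<Sum>i<n. noise_weight_deriv (z i) * (\<Prod>j\<in>{..<n}-{i}. noise_weight 0 (z j))) * ?g z)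
      = (\<Sum>i<n. \<Sum>z\<in>signs n. (\<Prod>j\<in>{..<n}-{i}. noise_weight 0 (z j)) * (noise_weight_deriv (z i) * ?g z))"
    unfolding sum_distrib_right by (subst sum.swap) (simp add: mult_ac)
  moreover have "(\<Sum>z\<in>signs n. (\<Prod>j\<in>{..<n}-{i}. noise_weight 0 (z j)) * (noise_weight_deriv (z i) * ?g z))
      = (f (shift p x i 1) + f (shift p x i (-1))) / 2 - f x" if "i < n" for i
    using that assms
    by (simp add: sum_signs_axis addvec_axis_vec) (simp add: axis_vec_def noise_weight_deriv_def shift_0)
  ultimately show ?thesis
    unfolding noise_generator_def by simp
qed

lemma noise_op_nonneg:
  assumes "0 \<le> e" "e \<le> 1" "\<And>y. 0 \<le> f y"
  shows "0 \<le> noise_op p n e f x"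
  using assms unfolding noise_op_def noise_weight_def
  by (intro sum_nonneg mult_nonneg_nonneg prod_nonneg) auto

lemma tendsto_difference_quotient_at_right_0:
  assumes "(g has_real_derivative D) (at 0)"
  shows "((\<lambda>e. (g e - g 0) / e) \<longlongrightarrow> D) (at_right 0)"
  using has_field_derivative_at_within[OF assms, of "{0<..}"]
  by (simp add: has_field_derivative_iff)

lemma tendsto_powr_divide_at_right_0:
  fixes g :: "real \<Rightarrow> real"
  assumes "(g has_real_derivative D) (at 0)" "g 0 = 0"
    and nonneg: "\<forall>\<^sub>F e in at_right 0. 0 \<le> g e" and "\<alpha> > 1"
  shows "((\<lambda>e. g e powr \<alpha> / e) \<longlongrightarrow> 0) (at_right 0)"
proof -
  have slope: "((\<lambda>e. g e / e) \<longlongrightarrow> D) (at_right 0)"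
    using tendsto_difference_quotient_at_right_0[OF assms(1)] assms(2) by simp
  have pos: "\<forall>\<^sub>F e in at_right 0. 0 < (e::real)"
    by (simp add: eventually_at_right_less)
  have "((\<lambda>e. (g e / e) powr \<alpha>) \<longlongrightarrow> D powr \<alpha>) (at_right 0)"
    using nonneg pos assms(4)
    by (intro tendsto_powr' slope tendsto_const) (auto elim: eventually_elim2)
  moreover have "((\<lambda>e. e powr (\<alpha> - 1)) \<longlongrightarrow> 0) (at_right (0::real))"
    using pos assms(4)
    by (intro tendsto_zero_powrI tendsto_ident_at tendsto_const) (auto elim: eventually_mono)
  ultimately have "((\<lambda>e. (g e / e) powr \<alpha> * e powr (\<alpha> - 1)) \<longlongrightarrow> D powr \<alpha> * 0) (at_right 0)"
    by (rule tendsto_mult)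
  moreover have "\<forall>\<^sub>F e in at_right 0. (g e / e) powr \<alpha> * e powr (\<alpha> - 1) = g e powr \<alpha> / e"
    using nonneg pos
    by eventually_elim (simp add: powr_divide powr_diff)
  ultimately show ?thesis
    by (simp add: tendsto_cong)
qed

lemma noise_op_powr_difference_quotient:
  assumes "p > 0" "\<alpha> > 1" "\<And>y. f y \<in> {0, 1}" "x \<in> cube p n"
  shows "((\<lambda>e. (noise_op p n e f x powr \<alpha> - f x) / e) \<longlongrightarrow> \<alpha> * f x * noise_generator p n f x)
           (at_right 0)"
proof -
  let ?T = "\<lambda>e. noise_op p n e f x"
  have deriv: "(?T has_real_derivative noise_generator p n f x) (at 0)"
    using noise_op_has_derivative_at_0[OF assms(1,4)] .
  have T0: "?T 0 = f x"
    using noise_op_0[OF assms(4)] .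
  consider "f x = 1" | "f x = 0"
    using assms(3) by blast
  then show ?thesis
  proof cases
    case 1
    have "((\<lambda>e. ?T e powr \<alpha>) has_real_derivative \<alpha> * noise_generator p n f x) (at 0)"
      using DERIV_powr[OF deriv _ DERIV_const] T0 1 by (simp add: mult.commute)
    from tendsto_difference_quotient_at_right_0[OF this] show ?thesis
      using T0 1 by simp
  next
    case 2
    have f_nonneg: "0 \<le> f y" for y
      using assms(3)[of y] by auto
    have "\<forall>\<^sub>F e in at_right 0. 0 < e \<and> e < (1::real)"
      unfolding eventually_at_right_field by (intro exI[of _ 1]) auto
    then have "\<forall>\<^sub>F e in at_right 0. 0 \<le> ?T e"
      by (rule eventually_mono) (auto intro!: noise_op_nonneg f_nonneg)
    from tendsto_powr_divide_at_right_0[OF deriv _ this assms(2)] show ?thesis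
      using T0 2 by simp
  qed
qed

subsection \<open>Influences as edge boundaries\<close>

definition edge_boundary :: "nat \<Rightarrow> nat \<Rightarrow> ((nat \<Rightarrow> nat) \<Rightarrow> real) \<Rightarrow> nat \<Rightarrow> int \<Rightarrow> real" where
  "edge_boundary p n f i d = (\<Sum>x\<in>cube p n. f x * (1 - f (shift p x i d)))"

lemma card_disagree_shift:
  assumes "p > 0" "i < n" "\<And>y. f y \<in> {0, 1}"
  shows "real (card {x \<in> cube p n. f x \<noteq> f (shift p x i d)})
       = edge_boundary p n f i d + edge_boundary p n f i (- d)"
proof -
  have "real (card {x \<in> cube p n. f x \<noteq> f (shift p x i d)})
      = (\<Sum>x\<in>cube p n. if f x \<noteq> f (shift p x i d) then 1 else 0)"
    by (simp add: sum.inter_filter[symmetric] finite_cube)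
  also have "\<dots> = (\<Sum>x\<in>cube p n. f x * (1 - f (shift p x i d)) + f (shift p x i d) * (1 - f x))"
  proof (intro sum.cong refl)
    have "(if a \<noteq> b then 1 else 0) = a * (1 - b) + b * (1 - a)" if "a \<in> {0, 1}" "b \<in> {0, 1}" for a b :: real
      using that by auto
    then show "(if f x \<noteq> f (shift p x i d) then 1 else 0)
        = f x * (1 - f (shift p x i d)) + f (shift p x i d) * (1 - f x)" for x
      using assms(3) by blast
  qed
  also have "\<dots> = edge_boundary p n f i d + (\<Sum>x\<in>cube p n. f (shift p x i d) * (1 - f x))"
    unfolding edge_boundary_def by (rule sum.distrib)
  also have "(\<Sum>x\<in>cube p n. f (shift p x i d) * (1 - f x))
      = (\<Sum>x\<in>cube p n. f (shift p x i d) * (1 - f (shift p (shift p x i d) i (- d))))"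
    using assms(1,2) by (intro sum.cong refl) (simp add: shift_shift_neg)
  also have "\<dots> = edge_boundary p n f i (- d)"
    unfolding edge_boundary_def
    by (rule sum_cube_shift[OF assms(1,2), of "\<lambda>y. f y * (1 - f (shift p y i (- d)))"])
  finally show ?thesis .
qed

lemma influence_eq_edge_boundary:
  assumes "p > 0" "i < n" "\<And>y. f y \<in> {0, 1}"
  shows "influence p n f i = (edge_boundary p n f i 1 + edge_boundary p n f i (- 1)) / real p ^ n"
  using card_disagree_shift[where f = f and d = 1, OF assms]
    card_disagree_shift[where f = f and d = "- 1", OF assms]
  unfolding influence_def by (simp add: assms(1) field_simps)

lemma sum_mult_noise_generator:
  assumes "p > 0" "\<And>y. f y \<in> {0, 1}"
  shows "(\<Sum>x\<in>cube p n. f x * noise_generator p n f x) = - (real p ^ n / 2) * total_influence p n f"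
proof -
  have "f x * noise_generator p n f x
      = - (\<Sum>i<n. f x * (1 - f (shift p x i 1)) + f x * (1 - f (shift p x i (- 1)))) / 2" for x
  proof -
    have "f x * ((f (shift p x i 1) + f (shift p x i (- 1))) / 2 - f x)
        = - (f x * (1 - f (shift p x i 1)) + f x * (1 - f (shift p x i (- 1)))) / 2" for i
      using assms(2)[of x] by (auto simp: field_simps)
    then have "f x * noise_generator p n f x
        = (\<Sum>i<n. - (f x * (1 - f (shift p x i 1)) + f x * (1 - f (shift p x i (- 1)))) / 2)"
      unfolding noise_generator_def sum_distrib_left by (rule sum.cong[OF refl])
    then show ?thesis
      by (simp only: sum_divide_distrib[symmetric] sum_negf)
  qed
  then have "(\<Sum>x\<in>cube p n. f x * noise_generator p n f x)
      = - (\<Sum>x\<in>cube p n. \<Sum>i<n. f x * (1 - f (shift p x i 1)) + f x * (1 - f (shift p x i (- 1)))) / 2"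
    by (simp only: sum_divide_distrib[symmetric] sum_negf)
  also have "(\<Sum>x\<in>cube p n. \<Sum>i<n. f x * (1 - f (shift p x i 1)) + f x * (1 - f (shift p x i (- 1))))
      = (\<Sum>i<n. edge_boundary p n f i 1 + edge_boundary p n f i (- 1))"
    unfolding edge_boundary_def by (subst sum.swap) (simp only: sum.distrib)
  moreover have "total_influence p n f
      = (\<Sum>i<n. edge_boundary p n f i 1 + edge_boundary p n f i (- 1)) / real p ^ n"
    unfolding total_influence_def using assms
    by (simp add: influence_eq_edge_boundary sum_divide_distrib)
  ultimately show ?thesis
    using assms(1) by simp
qed

subsection \<open>First-order expansion and the main theorem\<close>

lemma boolean_mean_boolean: "f \<in> boolean_mean p n m \<Longrightarrow> f y \<in> {0, 1}"
  unfolding boolean_mean_def by (cases "y \<in> cube p n") auto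

lemma finite_boolean_mean: "finite (boolean_mean p n m)"
proof (rule finite_subset)
  show "boolean_mean p n m \<subseteq> (\<lambda>S y. if y \<in> S then 1 else 0) ` Pow (cube p n)"
  proof
    fix f assume f: "f \<in> boolean_mean p n m"
    then have "f = (\<lambda>y. if y \<in> {x \<in> cube p n. f x = 1} then 1 else 0)"
      unfolding boolean_mean_def by (force simp: fun_eq_iff)
    then show "f \<in> (\<lambda>S y. if y \<in> S then 1 else 0) ` Pow (cube p n)"
      by blast
  qed
qed (simp add: finite_cube)

lemma expect_noise_op_powr_expansion:
  assumes "p > 0" "\<alpha> > 1" "f \<in> boolean_mean p n m"
  shows "((\<lambda>e. (expect p n (\<lambda>x. noise_op p n e f x powr \<alpha>) - m) / e)
           \<longlongrightarrow> - (\<alpha> / 2) * total_influence p n f) (at_right 0)"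
proof -
  have f01: "\<And>y. f y \<in> {0, 1}"
    using assms(3) by (rule boolean_mean_boolean)
  have m: "m = (\<Sum>x\<in>cube p n. f x) / real p ^ n"
    using assms(3) unfolding boolean_mean_def expect_def by simp
  have "(\<lambda>e. (expect p n (\<lambda>x. noise_op p n e f x powr \<alpha>) - m) / e)
      = (\<lambda>e. (\<Sum>x\<in>cube p n. (noise_op p n e f x powr \<alpha> - f x) / e) / real p ^ n)"
    unfolding m expect_def
    by (simp add: sum_divide_distrib[symmetric] sum_subtractf diff_divide_distrib mult.commute)
  moreover have "((\<lambda>e. (\<Sum>x\<in>cube p n. (noise_op p n e f x powr \<alpha> - f x) / e) / real p ^ n)
      \<longlongrightarrow> (\<Sum>x\<in>cube p n. \<alpha> * f x * noise_generator p n f x) / real p ^ n) (at_right 0)"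
    using assms(1)
    by (intro tendsto_divide tendsto_sum tendsto_const noise_op_powr_difference_quotient assms(2) f01) auto
  moreover have "(\<Sum>x\<in>cube p n. \<alpha> * f x * noise_generator p n f x) / real p ^ n
      = - (\<alpha> / 2) * total_influence p n f"
    using sum_mult_noise_generator[OF assms(1) f01] assms(1)
    by (simp add: mult.assoc sum_distrib_left[symmetric])
  ultimately show ?thesis
    by simp
qed

lemma eventually_maximizer_maximizes_slope:
  fixes \<Phi> :: "real \<Rightarrow> 'a \<Rightarrow> real" and L :: "'a \<Rightarrow> real"
  assumes "finite B"
    and "\<And>f. f \<in> B \<Longrightarrow> ((\<lambda>e. (\<Phi> e f - c) / e) \<longlongrightarrow> L f) (at_right 0)"
  shows "\<forall>\<^sub>F e in at_right 0. \<forall>f\<in>B. (\<forall>g\<in>B. \<Phi> e g \<le> \<Phi> e f) \<longrightarrow> (\<forall>g\<in>B. L g \<le> L f)"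
proof -
  have "\<forall>\<^sub>F e in at_right 0. L f < L g \<longrightarrow> \<Phi> e f < \<Phi> e g" if "f \<in> B" "g \<in> B" for f g
  proof (cases "L f < L g")
    case True
    have "((\<lambda>e. (\<Phi> e g - c) / e - (\<Phi> e f - c) / e) \<longlongrightarrow> L g - L f) (at_right 0)"
      using that by (intro tendsto_diff assms(2))
    then have "\<forall>\<^sub>F e in at_right 0. 0 < (\<Phi> e g - c) / e - (\<Phi> e f - c) / e"
      using True by (intro order_tendstoD(1)) auto
    with eventually_at_right_less[of 0] show ?thesis
      by eventually_elim (auto simp: diff_divide_distrib[symmetric] zero_less_divide_iff)
  qed simp
  then have "\<forall>\<^sub>F e in at_right 0. \<forall>(f, g)\<in>B \<times> B. L f < L g \<longrightarrow> \<Phi> e f < \<Phi> e g"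
    using assms(1) by (intro eventually_ball_finite) auto
  then show ?thesis
    by eventually_elim (force simp: not_le[symmetric])
qed

theorem theorem6:
  fixes p n j :: nat and \<alpha> m :: real
  assumes "p \<ge> 2" and "n \<ge> 1" and "\<alpha> > 1"
    and "j \<le> p ^ n" and "m = real j / real p ^ n"
  shows "\<exists>\<epsilon>0>0. \<forall>\<epsilon>. 0 < \<epsilon> \<and> \<epsilon> < \<epsilon>0 \<longrightarrow>
           (\<forall>f\<in>boolean_mean p n m.
              (\<forall>g\<in>boolean_mean p n m.
                 expect p n (\<lambda>x. noise_op p n \<epsilon> g x powr \<alpha>)
                   \<le> expect p n (\<lambda>x. noise_op p n \<epsilon> f x powr \<alpha>))
              \<longrightarrow> (\<forall>g\<in>boolean_mean p n m. total_influence p n f \<le> total_influence p n g))"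
proof -
  let ?I = "total_influence p n"
  have "\<forall>\<^sub>F \<epsilon> in at_right 0. \<forall>f\<in>boolean_mean p n m.
      (\<forall>g\<in>boolean_mean p n m. expect p n (\<lambda>x. noise_op p n \<epsilon> g x powr \<alpha>)
                                \<le> expect p n (\<lambda>x. noise_op p n \<epsilon> f x powr \<alpha>))
      \<longrightarrow> (\<forall>g\<in>boolean_mean p n m. - (\<alpha> / 2) * ?I g \<le> - (\<alpha> / 2) * ?I f)"
    using assms(1,3)
    by (intro eventually_maximizer_maximizes_slope finite_boolean_mean expect_noise_op_powr_expansion) auto
  moreover have "- (\<alpha> / 2) * ?I g \<le> - (\<alpha> / 2) * ?I f \<longleftrightarrow> ?I f \<le> ?I g" for f g
    using assms(3) by simp
  ultimately show ?thesis
    unfolding eventually_at_right_field by auto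
qed

end
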